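(* Let $G=(V,E)$ be a finite, connected, non-complete undirected graph, and let $P$ be the distribution of a random vector $\mathbf X=(X_\alpha)_{\alpha\in V}$ that is perfectly Markov to $G$. Assume $d_2(G)\le |V|-2$. Then there exists $k\in\{1,\dots,|V|-2\}$ such that $d_2(G_k)\le k$ and $G=G_k$, where $G_k$ is the $k$-graph of $P$.
   Context: For a vertex $\alpha$, $d(\alpha\mid G)$ is the number of neighbours of $\alpha$ in $G$. The degree two of $\alpha$ is $d_2(\alpha\mid G)=|\{\gamma:\gamma\text{ adjacent to }\alpha,\ d(\gamma\mid G)\ge2\}|$, and $d_2(G)=\max_{\alpha\in V}d_2(\alpha\mid G)$. A set $S$ separates disjoint nonempty vertex sets $A,B$ in $G$ if every path from $A$ to $B$ meets $S$. Write $\mathbf X_S=(X_\gamma)_{\gamma\in S}$. $P$ satisfies the global Markov property w.r.t. $G$ if, for all disjoint $A,B,S\subseteq V$ with $A,B$ nonempty, $S$ separating $A,B$ implies $\mathbf X_A\perp\!\!\!\perp\mathbf X_B\mid\mathbf X_S$. $P$ is perfectly Markov to $G$ if it satisfies the global Markov property and, for all disjoint nonempty $A,B,S\subseteq V$, $\mathbf X_A\perp\!\!\!\perp\mathbf X_B\mid\mathbf X_S$ implies that $S$ separates $A$ and $B$ in $G$. For $k\in\{0,\dots,|V|-2\}$, the $k$-graph $G_k=(V,E_k)$ has distinct $\alpha,\beta$ non-adjacent iff there exists $S\subseteq V\setminus\{\alpha,\beta\}$ with $|S|=k$ and $X_\alpha\perp\!\!\!\perp X_\beta\mid\mathbf X_S$.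 *)

theory Defs
  imports "HOL-Probability.Probability"
begin

definition ugraph :: "'v set \<Rightarrow> ('v \<Rightarrow> 'v \<Rightarrow> bool) \<Rightarrow> bool" where
  "ugraph V E \<longleftrightarrow> finite V \<and> (\<forall>x y. E x y \<longrightarrow> x \<in> V \<and> y \<in> V \<and> x \<noteq> y \<and> E y x)"

definition connected_graph :: "'v set \<Rightarrow> ('v \<Rightarrow> 'v \<Rightarrow> bool) \<Rightarrow> bool" where
  "connected_graph V E \<longleftrightarrow> V \<noteq> {} \<and> (\<forall>x\<in>V. \<forall>y\<in>V. E\<^sup>*\<^sup>* x y)"

definition complete_graph :: "'v set \<Rightarrow> ('v \<Rightarrow> 'v \<Rightarrow> bool) \<Rightarrow> bool" where
  "complete_graph V E \<longleftrightarrow> (\<forall>x\<in>V. \<forall>y\<in>V. x \<noteq> y \<longrightarrow> E x y)"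

definition deg :: "'v set \<Rightarrow> ('v \<Rightarrow> 'v \<Rightarrow> bool) \<Rightarrow> 'v \<Rightarrow> nat" where
  "deg V E a = card {g \<in> V. E a g}"

definition deg2 :: "'v set \<Rightarrow> ('v \<Rightarrow> 'v \<Rightarrow> bool) \<Rightarrow> 'v \<Rightarrow> nat" where
  "deg2 V E a = card {g \<in> V. E a g \<and> deg V E g \<ge> 2}"

definition max_deg2 :: "'v set \<Rightarrow> ('v \<Rightarrow> 'v \<Rightarrow> bool) \<Rightarrow> nat" where
  "max_deg2 V E = Max (deg2 V E ` V)"

definition is_path :: "('v \<Rightarrow> 'v \<Rightarrow> bool) \<Rightarrow> 'v list \<Rightarrow> bool" where
  "is_path E p \<longleftrightarrow> p \<noteq> [] \<and> (\<forall>i. Suc i < length p \<longrightarrow> E (p ! i) (p ! Suc i))"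

definition separates :: "('v \<Rightarrow> 'v \<Rightarrow> bool) \<Rightarrow> 'v set \<Rightarrow> 'v set \<Rightarrow> 'v set \<Rightarrow> bool" where
  "separates E S A B \<longleftrightarrow>
     (\<forall>p. is_path E p \<and> hd p \<in> A \<and> last p \<in> B \<longrightarrow> set p \<inter> S \<noteq> {})"

definition vec_algebra ::
  "'a measure \<Rightarrow> ('v \<Rightarrow> 'b measure) \<Rightarrow> ('v \<Rightarrow> 'a \<Rightarrow> 'b) \<Rightarrow> 'v set \<Rightarrow> 'a measure" where
  "vec_algebra M N X S = vimage_algebra (space M) (\<lambda>w. restrict (\<lambda>g. X g w) S) (PiM S N)"

definition cond_indep ::
  "'a measure \<Rightarrow> ('v \<Rightarrow> 'b measure) \<Rightarrow> ('v \<Rightarrow> 'a \<Rightarrow> 'b) \<Rightarrow> 'v set \<Rightarrow> 'v set \<Rightarrow> 'v set \<Rightarrow> bool" where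
  "cond_indep M N X A B S \<longleftrightarrow>
     (\<forall>a \<in> sets (vec_algebra M N X A). \<forall>b \<in> sets (vec_algebra M N X B).
        AE w in M. real_cond_exp M (vec_algebra M N X S) (indicator (a \<inter> b)) w
                 = real_cond_exp M (vec_algebra M N X S) (indicator a) w *
                   real_cond_exp M (vec_algebra M N X S) (indicator b) w)"

definition global_markov ::
  "'v set \<Rightarrow> ('v \<Rightarrow> 'v \<Rightarrow> bool) \<Rightarrow> 'a measure \<Rightarrow> ('v \<Rightarrow> 'b measure) \<Rightarrow> ('v \<Rightarrow> 'a \<Rightarrow> 'b) \<Rightarrow> bool" where
  "global_markov V E M N X \<longleftrightarrow>
     (\<forall>A B S. A \<subseteq> V \<and> B \<subseteq> V \<and> S \<subseteq> V \<and> A \<noteq> {} \<and> B \<noteq> {} \<and>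
        A \<inter> B = {} \<and> A \<inter> S = {} \<and> B \<inter> S = {} \<and> separates E S A B
        \<longrightarrow> cond_indep M N X A B S)"

definition perfectly_markov ::
  "'v set \<Rightarrow> ('v \<Rightarrow> 'v \<Rightarrow> bool) \<Rightarrow> 'a measure \<Rightarrow> ('v \<Rightarrow> 'b measure) \<Rightarrow> ('v \<Rightarrow> 'a \<Rightarrow> 'b) \<Rightarrow> bool" where
  "perfectly_markov V E M N X \<longleftrightarrow> global_markov V E M N X \<and>
     (\<forall>A B S. A \<subseteq> V \<and> B \<subseteq> V \<and> S \<subseteq> V \<and> A \<noteq> {} \<and> B \<noteq> {} \<and> S \<noteq> {} \<and>
        A \<inter> B = {} \<and> A \<inter> S = {} \<and> B \<inter> S = {} \<and> cond_indep M N X A B S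
        \<longrightarrow> separates E S A B)"

definition kgraph ::
  "'v set \<Rightarrow> 'a measure \<Rightarrow> ('v \<Rightarrow> 'b measure) \<Rightarrow> ('v \<Rightarrow> 'a \<Rightarrow> 'b) \<Rightarrow> nat \<Rightarrow> 'v \<Rightarrow> 'v \<Rightarrow> bool" where
  "kgraph V M N X k a b \<longleftrightarrow> a \<in> V \<and> b \<in> V \<and> a \<noteq> b \<and>
     \<not> (\<exists>S. S \<subseteq> V - {a, b} \<and> card S = k \<and> cond_indep M N X {a} {b} S)"

end

theory Submission
  imports Defs
begin

(*
  Put k = max 1 (max_deg2 V E); then 1 \<le> k \<le> |V| - 2, because a connected
  non-complete graph has at least three vertices.  We show E = G_k, which gives the
  claim since then max_deg2 of G_k is max_deg2 V E \<le> k.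

  * Edges survive in G_k: if a, b are adjacent, the one-edge path [a, b] avoids every
    set S \<subseteq> V - {a, b}, so no nonempty such S separates a from b; perfect Markovness
    then forbids X_a \<perp> X_b | X_S for every S of size k \<ge> 1.
  * Non-edges disappear from G_k: if a, b are distinct and non-adjacent, every path from
    a to b passes through a neighbour of a of degree at least two (the vertex right
    after the last visit of a).  These neighbours number deg2 a \<le> k, so they extend to a
    set S \<subseteq> V - {a, b} of size exactly k that still separates a from b, and the global
    Markov property yields X_a \<perp> X_b | X_S.
*)

definition branching_nbrs :: "'v set \<Rightarrow> ('v \<Rightarrow> 'v \<Rightarrow> bool) \<Rightarrow> 'v \<Rightarrow> 'v set" where
  "branching_nbrs V E a = {g \<in> V. E a g \<and> deg V E g \<ge> 2}"

lemma card_branching_nbrs: "card (branching_nbrs V E a) = deg2 V E a"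
  unfolding branching_nbrs_def deg2_def ..

lemma deg2_le_max_deg2:
  assumes "finite V" "a \<in> V"
  shows "deg2 V E a \<le> max_deg2 V E"
  using assms unfolding max_deg2_def by simp

text \<open>A connected graph that is not complete has two non-adjacent vertices and a
  third one next to either of them, hence at least three vertices.\<close>

lemma card_ge_3_if_connected_not_complete:
  assumes ug: "ugraph V E" and conn: "connected_graph V E" and "\<not> complete_graph V E"
  shows "card V \<ge> 3"
proof -
  have fin: "finite V" using ug unfolding ugraph_def by auto
  obtain a b where ab: "a \<in> V" "b \<in> V" "a \<noteq> b" "\<not> E a b"
    using assms(3) unfolding complete_graph_def by auto
  have "E\<^sup>*\<^sup>* a b" using conn ab unfolding connected_graph_def by auto
  then obtain c where "E a c" "E\<^sup>*\<^sup>* c b"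
    using ab(3) by (metis converse_rtranclpE)
  then have c: "c \<in> V" "c \<noteq> a" "c \<noteq> b" using ug ab(4) unfolding ugraph_def by auto
  have "card {a, b, c} = 3" using ab c by auto
  moreover have "card {a, b, c} \<le> card V" using fin ab c by (intro card_mono) auto
  ultimately show ?thesis by simp
qed

lemma not_separates_adjacent:
  assumes "E a b" "a \<notin> S" "b \<notin> S"
  shows "\<not> separates E S {a} {b}"
proof -
  have "is_path E [a, b]" using assms(1) unfolding is_path_def by (auto simp: less_Suc_eq)
  then show ?thesis using assms(2,3) unfolding separates_def by fastforce
qed

text \<open>Key combinatorial fact: on any path from a to a non-adjacent vertex b, the vertex
  following the last occurrence of a is a neighbour of a with a further neighbour
  (the next vertex on the path), hence a branching neighbour of a.\<close>

lemma path_meets_branching_nbrs: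
  assumes ug: "ugraph V E" and aV: "a \<in> V" and ab: "a \<noteq> b" "\<not> E a b"
    and p: "is_path E p" "hd p = a" "last p = b"
  shows "set p \<inter> branching_nbrs V E a \<noteq> {}"
proof -
  have fin: "finite V" using ug unfolding ugraph_def by auto
  have ne: "p \<noteq> []" using p unfolding is_path_def by auto
  define J where "J = {j. j < length p \<and> p ! j = a}"
  define i where "i = Max J"
  have J: "finite J" "0 \<in> J" using ne p unfolding J_def by (auto simp: hd_conv_nth)
  then have "i \<in> J" unfolding i_def using Max_in by blast
  then have i: "i < length p" "p ! i = a" unfolding J_def by auto
  have i_last: "\<And>j. j < length p \<Longrightarrow> p ! j = a \<Longrightarrow> j \<le> i"
    using J(1) unfolding i_def J_def by simp
  have p_end: "p ! (length p - 1) = b" using p ne by (simp add: last_conv_nth)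
  have "i \<noteq> length p - 1" using i p_end ab(1) by auto
  then have i1: "Suc i < length p" using i(1) by linarith
  define c where "c = p ! Suc i"
  have Eac: "E a c" using p(1) i1 i unfolding is_path_def c_def by auto
  then have c: "c \<in> V" "E c a" using ug unfolding ugraph_def by auto
  have "Suc i \<noteq> length p - 1" using p_end Eac ab(2) unfolding c_def by auto
  then have i2: "Suc (Suc i) < length p" using i1 by linarith
  define d where "d = p ! Suc (Suc i)"
  have Ecd: "E c d" using p(1) i2 unfolding is_path_def c_def d_def by auto
  have "d \<noteq> a" using i_last[of "Suc (Suc i)"] i2 d_def by auto
  moreover have "d \<in> V" using ug Ecd unfolding ugraph_def by auto
  ultimately have "card {a, d} \<le> card {g \<in> V. E c g}"
    using fin aV c Ecd by (intro card_mono) auto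
  then have "deg V E c \<ge> 2" using \<open>d \<noteq> a\<close> unfolding deg_def by simp
  moreover have "c \<in> set p" using i1 c_def by auto
  ultimately show ?thesis using c Eac unfolding branching_nbrs_def by auto
qed

lemma separates_non_adjacent:
  assumes "ugraph V E" "a \<in> V" "a \<noteq> b" "\<not> E a b" "branching_nbrs V E a \<subseteq> S"
  shows "separates E S {a} {b}"
  unfolding separates_def
  using path_meets_branching_nbrs[OF assms(1-4)] assms(5) by blast

lemma global_markov_pair:
  assumes gm: "global_markov V E M N X" and ab: "a \<in> V" "b \<in> V" "a \<noteq> b"
    and S: "S \<subseteq> V - {a, b}" and sep: "separates E S {a} {b}"
  shows "cond_indep M N X {a} {b} S"
  by (rule gm[unfolded global_markov_def, rule_format]) (use ab S sep in auto)

lemma perfectly_markov_pair: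
  assumes pm: "perfectly_markov V E M N X" and ab: "a \<in> V" "b \<in> V" "a \<noteq> b"
    and S: "S \<subseteq> V - {a, b}" "S \<noteq> {}" and ci: "cond_indep M N X {a} {b} S"
  shows "separates E S {a} {b}"
proof -
  have "\<forall>A B S. A \<subseteq> V \<and> B \<subseteq> V \<and> S \<subseteq> V \<and> A \<noteq> {} \<and> B \<noteq> {} \<and> S \<noteq> {} \<and>
      A \<inter> B = {} \<and> A \<inter> S = {} \<and> B \<inter> S = {} \<and> cond_indep M N X A B S
      \<longrightarrow> separates E S A B"
    using pm unfolding perfectly_markov_def by (rule conjunct2)
  then show ?thesis by (rule allE[of _ "{a}"], elim allE[of _ "{b}"] allE[of _ S] mp)
    (use ab S ci in auto)
qed

text \<open>Adjacent vertices stay adjacent in G_k for k \<ge> 1: a conditional independence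
  given a nonempty set would force that set to separate them.\<close>

lemma edge_in_kgraph:
  assumes ug: "ugraph V E" and pm: "perfectly_markov V E M N X"
    and k: "k \<ge> 1" and Eab: "E a b"
  shows "kgraph V M N X k a b"
proof -
  have ab: "a \<in> V" "b \<in> V" "a \<noteq> b" using ug Eab unfolding ugraph_def by auto
  have "\<not> cond_indep M N X {a} {b} S" if S: "S \<subseteq> V - {a, b}" "card S = k" for S
  proof
    assume ci: "cond_indep M N X {a} {b} S"
    have "S \<noteq> {}" using S k by auto
    then have "separates E S {a} {b}" using perfectly_markov_pair[OF pm ab] S(1) ci by blast
    then show False using not_separates_adjacent[of E a b S] Eab S by auto
  qed
  then show ?thesis using ab unfolding kgraph_def by blast
qed

text \<open>Non-adjacent vertices a, b are non-adjacent in G_k whenever deg2 a \<le> k \<le> |V| - 2: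
  pad the branching neighbours of a to a separating set of size k.\<close>

lemma non_edge_not_in_kgraph:
  assumes ug: "ugraph V E" and gm: "global_markov V E M N X"
    and ab: "a \<in> V" "b \<in> V" "a \<noteq> b" "\<not> E a b"
    and k: "deg2 V E a \<le> k" "k \<le> card V - 2"
  shows "\<not> kgraph V M N X k a b"
proof -
  have fin: "finite V" using ug unfolding ugraph_def by auto
  have nbrs: "branching_nbrs V E a \<subseteq> V - {a, b}"
    using ug ab(4) unfolding branching_nbrs_def ugraph_def by auto
  have "card (V - {a, b}) = card V - 2" using ab fin by auto
  then obtain S where S: "branching_nbrs V E a \<subseteq> S" "S \<subseteq> V - {a, b}" "card S = k"
    using exists_subset_between[OF _ _ nbrs] fin k by (auto simp: card_branching_nbrs)
  have "separates E S {a} {b}" using separates_non_adjacent[OF ug ab(1,3,4) S(1)] .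
  then have "cond_indep M N X {a} {b} S" using global_markov_pair[OF gm ab(1-3) S(2)] by blast
  then show ?thesis using S unfolding kgraph_def by blast
qed

lemma graph_eq_kgraph:
  assumes ug: "ugraph V E" and pm: "perfectly_markov V E M N X"
    and k: "1 \<le> k" "max_deg2 V E \<le> k" "k \<le> card V - 2"
  shows "E = kgraph V M N X k"
proof (intro ext iffI)
  fix a b assume "E a b"
  then show "kgraph V M N X k a b" using edge_in_kgraph[OF ug pm k(1)] by blast
next
  fix a b assume kab: "kgraph V M N X k a b"
  then have ab: "a \<in> V" "b \<in> V" "a \<noteq> b" unfolding kgraph_def by auto
  have "deg2 V E a \<le> k"
    using deg2_le_max_deg2[of V a E] ug ab(1) k(2) unfolding ugraph_def by simp
  moreover have "global_markov V E M N X" using pm unfolding perfectly_markov_def by simp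
  ultimately show "E a b"
    using non_edge_not_in_kgraph[OF ug _ ab, of M N X k] k(3) kab by blast
qed

theorem corollary9:
  fixes V :: "'v set" and E :: "'v \<Rightarrow> 'v \<Rightarrow> bool"
    and M :: "'a measure" and N :: "'v \<Rightarrow> 'b measure" and X :: "'v \<Rightarrow> 'a \<Rightarrow> 'b"
  assumes "ugraph V E"
    and "connected_graph V E"
    and "\<not> complete_graph V E"
    and "prob_space M"
    and "\<And>g. g \<in> V \<Longrightarrow> X g \<in> measurable M (N g)"
    and "perfectly_markov V E M N X"
    and "max_deg2 V E \<le> card V - 2"
  shows "\<exists>k \<in> {1..card V - 2}. max_deg2 V (kgraph V M N X k) \<le> k \<and> E = kgraph V M N X k"
proof -
  define k where "k = max 1 (max_deg2 V E)"
  have "card V \<ge> 3" using card_ge_3_if_connected_not_complete assms(1-3) .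
  then have k_range: "k \<in> {1..card V - 2}" using assms(7) unfolding k_def by auto
  have eq: "E = kgraph V M N X k"
    using graph_eq_kgraph[OF assms(1,6)] k_range unfolding k_def by auto
  have "max_deg2 V (kgraph V M N X k) = max_deg2 V E" using eq by simp
  then have "max_deg2 V (kgraph V M N X k) \<le> k" unfolding k_def by simp
  with k_range eq show ?thesis by blast
qed

end
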